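(* Let $(f,g),(f',g')\in\Theta$ both be in general position, with representation dimension $m$ and $k\ge m+1$ labels. Let $C=\sqrt{2m/(k-1)}$, and let $\sigma_{\min}$ and $\sigma_{\max}$ be respectively the smallest and the largest singular value among all matrices $\tilde L_{\mathcal J}$ of the model $(f,g)$ (over all pivots $\tilde y$ and all $m$-subsets $\mathcal J\subseteq\mathcal Y\setminus\{\tilde y\}$). Then $$C\,\frac{d_{\mathrm{logit}}(p_{f,g},p_{f',g'})}{\sigma_{\max}}\ \le\ d_{\mathrm{rep}}((f,g),(f',g'))\ \le\ C\,\frac{d_{\mathrm{logit}}(p_{f,g},p_{f',g'})}{\sigma_{\min}}.$$
   Context: Model class $\Theta$: pairs $(f,g)$, $f:\mathcal X\to\mathbb R^m$, $g:\mathcal Y\to\mathbb R^m$, $\mathcal Y$ a finite set of $k$ labels, $\sum_y g(y)=0$, inducing $p_{f,g}(y\mid x)\propto\exp(f(x)^\top g(y))$; $p_x$ is the data distribution. Logits $u(x)=(f(x)^\top g(y))_{y\in\mathcal Y}$, $d_{\mathrm{logit}}^2=\mathbb E_{x\sim p_x}\|u(x)-u'(x)\|_2^2$. For a pivot $\tilde y\in\mathcal Y$ set $\tilde g(y)=g(y)-g(\tilde y)$, and for $\mathcal J=\{y_1,\dots,y_m\}\subseteq\mathcal Y\setminus\{\tilde y\}$ let $\tilde L_{\mathcal J}=(\tilde g(y_1)\ \cdots\ \tilde g(y_m))\in\mathbb R^{m\times m}$ (similarly $\tilde L'_{\mathcal J}$ from $g'$). A model is in general position if $\tilde L_{\mathcal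 J}$ is invertible for every pivot $\tilde y$ and every $m$-subset $\mathcal J\subseteq\mathcal Y\setminus\{\tilde y\}$, and $\mathrm{span}\{f(x):x\in\mathrm{supp}(p_x)\}=\mathbb R^m$. Put $\tilde A_{\mathcal J}=\tilde L_{\mathcal J}^{-\top}\tilde L_{\mathcal J}'^{\top}$ and $J=\binom{k-1}{m}$. The linear identifiability dissimilarity is $$d_{\mathrm{rep}}^2((f,g),(f',g'))=\frac{1}{kJ}\sum_{\tilde y\in\mathcal Y}\ \sum_{\mathcal J\subseteq\mathcal Y\setminus\{\tilde y\},\,|\mathcal J|=m}\mathbb E_{x\sim p_x}\|f(x)-\tilde A_{\mathcal J}f'(x)\|_2^2.$$ *)

theory Defs
  imports "HOL-Probability.Probability"
begin

text \<open>Representation space: real^'m (m = CARD('m)); labels: finite type 'y (k = CARD('y)).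
 A model is a pair (f,g) with f :: 'x => real^'m and g :: 'y => real^'m.\<close>

definition in_Theta :: "('y::finite \<Rightarrow> real^'m) \<Rightarrow> bool" where
  "in_Theta g \<longleftrightarrow> (\<Sum>y\<in>UNIV. g y) = 0"

definition logits :: "('x \<Rightarrow> real^'m) \<Rightarrow> ('y::finite \<Rightarrow> real^'m) \<Rightarrow> 'x \<Rightarrow> real^'y" where
  "logits f g x = (\<chi> y. f x \<bullet> g y)"

definition d_logit_sq :: "'x measure \<Rightarrow> ('x \<Rightarrow> real^'m) \<Rightarrow> ('y::finite \<Rightarrow> real^'m)
    \<Rightarrow> ('x \<Rightarrow> real^'m) \<Rightarrow> ('y \<Rightarrow> real^'m) \<Rightarrow> real" where
  "d_logit_sq M f g f' g' = (\<integral>x. (norm (logits f g x - logits f' g' x))\<^sup>2 \<partial>M)"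

definition subsets_J :: "'y::finite \<Rightarrow> 'm::finite itself \<Rightarrow> 'y set set" where
  "subsets_J yt _ = {J. J \<subseteq> UNIV - {yt} \<and> card J = CARD('m)}"

text \<open>A fixed enumeration J = {y_1,...,y_m} of an m-subset (indexed by 'm).
 The same enumeration is used for both models.\<close>
definition enum_J :: "'y set \<Rightarrow> 'm::finite \<Rightarrow> 'y" where
  "enum_J J = (SOME e. bij_betw e (UNIV :: 'm set) J)"

definition Ltil :: "('y \<Rightarrow> real^'m::finite) \<Rightarrow> 'y \<Rightarrow> 'y set \<Rightarrow> real^'m^'m" where
  "Ltil g yt J = (\<chi> i j. (g (enum_J J j) - g yt) $ i)"

definition Atil :: "('y \<Rightarrow> real^'m::finite) \<Rightarrow> ('y \<Rightarrow> real^'m) \<Rightarrow> 'y \<Rightarrow> 'y set \<Rightarrow> real^'m^'m" where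
  "Atil g g' yt J = matrix_inv (transpose (Ltil g yt J)) ** transpose (Ltil g' yt J)"

definition d_rep_sq :: "'x measure \<Rightarrow> ('x \<Rightarrow> real^'m::finite) \<Rightarrow> ('y::finite \<Rightarrow> real^'m)
    \<Rightarrow> ('x \<Rightarrow> real^'m) \<Rightarrow> ('y \<Rightarrow> real^'m) \<Rightarrow> real" where
  "d_rep_sq M f g f' g' =
     (1 / (real CARD('y) * real ((CARD('y) - 1) choose CARD('m)))) *
     (\<Sum>yt\<in>UNIV. \<Sum>J\<in>subsets_J yt TYPE('m).
        \<integral>x. (norm (f x - Atil g g' yt J *v f' x))\<^sup>2 \<partial>M)"

definition measure_support :: "'x::topological_space measure \<Rightarrow> 'x set" where
  "measure_support M = {x. \<forall>U. open U \<and> x \<in> U \<longrightarrow> emeasure M U \<noteq> 0}"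

definition general_position :: "'x::topological_space measure \<Rightarrow> ('x \<Rightarrow> real^'m::finite)
    \<Rightarrow> ('y::finite \<Rightarrow> real^'m) \<Rightarrow> bool" where
  "general_position M f g \<longleftrightarrow>
     (\<forall>yt. \<forall>J\<in>subsets_J yt TYPE('m). invertible (Ltil g yt J)) \<and>
     span (f ` measure_support M) = UNIV"

definition singular_values :: "real^'n^'n \<Rightarrow> real set" where
  "singular_values A = {sqrt lam | lam. \<exists>v. v \<noteq> 0 \<and> (transpose A ** A) *v v = lam *s v}"

definition all_singular_values :: "('y::finite \<Rightarrow> real^'m::finite) \<Rightarrow> real set" where
  "all_singular_values g = (\<Union>yt. \<Union>J\<in>subsets_J yt TYPE('m). singular_values (Ltil g yt J))"

end

theory Submission
  imports Defs
begin

text \<open>Fix a pivot \<open>y\<close> and an \<open>m\<close>-subset \<open>J\<close>, write \<open>L, L'\<close> for the pivot matrices of the two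
  models and \<open>A = L\<^sup>-\<^sup>T L'\<^sup>T\<close>. Then \<open>L\<^sup>T (f x - A f' x) = L\<^sup>T f x - L'\<^sup>T f' x\<close> is the vector of
  differences \<open>\<delta> y\<^sub>j - \<delta> y\<close> of the logit residual \<open>\<delta> = u x - u' x\<close>. Summed over all pivots and
  subsets, and using \<open>\<Sum>\<^sub>y \<delta> y = 0\<close>, these squared norms add up to \<open>2k C(k-2,m-1) |\<delta>|\<^sup>2\<close>.
  Each of them lies between \<open>|f x - A f' x|\<^sup>2\<close> times the squares of the extreme singular values
  (Rayleigh quotients of \<open>L L\<^sup>T\<close>). Integrating and dividing by \<open>k C(k-1,m)\<close>, where
  \<open>m C(k-1,m) = (k-1) C(k-2,m-1)\<close>, gives \<open>\<sigma>\<^sub>m\<^sub>i\<^sub>n\<^sup>2 d_rep\<^sup>2 \<le> 2m/(k-1) d_logit\<^sup>2 \<le> \<sigma>\<^sub>m\<^sub>a\<^sub>x\<^sup>2 d_rep\<^sup>2\<close>.\<close>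

section \<open>Eigenvalues and singular values\<close>

lemma linear_plus_quadratic_nonneg_imp_zero:
  fixes a b :: real
  assumes "\<And>t. 0 \<le> a * t + b * t\<^sup>2"
  shows "a = 0"
proof -
  define c where "c = \<bar>b\<bar> + 1"
  have c: "c > 0" unfolding c_def by simp
  define t where "t = - a / c"
  have "0 \<le> a * t + b * t\<^sup>2" by (rule assms)
  also have "\<dots> \<le> a * t + \<bar>b\<bar> * t\<^sup>2" by (simp add: mult_right_mono)
  also have "\<dots> = - (a / c)\<^sup>2"
    using c unfolding t_def by (simp add: field_simps power2_eq_square) (simp add: c_def algebra_simps)
  finally show ?thesis using c by simp
qed

lemma inner_matrix_vector_symmetric:
  fixes T :: "real^'n^'n"
  assumes "transpose T = T"
  shows "u \<bullet> (T *v v) = v \<bullet> (T *v u)"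
proof -
  have "u \<bullet> (T *v v) = (transpose T *v u) \<bullet> v"
    by (simp add: dot_lmul_matrix transpose_matrix_vector)
  then show ?thesis using assms by (simp add: inner_commute)
qed

lemma psd_quadratic_form_eq_0_imp_zero:
  fixes T :: "real^'n^'n"
  assumes sym: "transpose T = T" and psd: "\<And>v. 0 \<le> v \<bullet> (T *v v)"
    and "z \<bullet> (T *v z) = 0"
  shows "T *v z = 0"
proof -
  let ?h = "T *v z"
  have "0 \<le> (2 * (?h \<bullet> ?h)) * t + (?h \<bullet> (T *v ?h)) * t\<^sup>2" for t
  proof -
    have "0 \<le> (z + t *\<^sub>R ?h) \<bullet> (T *v (z + t *\<^sub>R ?h))" by (rule psd)
    also have "\<dots> = z \<bullet> (T *v z) + t * (z \<bullet> (T *v ?h)) + t * (?h \<bullet> ?h) + t\<^sup>2 * (?h \<bullet> (T *v ?h))"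
      by (simp add: matrix_vector_right_distrib inner_add_left inner_add_right
          scaleR_matrix_vector_assoc[symmetric] power2_eq_square algebra_simps)
    also have "\<dots> = (2 * (?h \<bullet> ?h)) * t + (?h \<bullet> (T *v ?h)) * t\<^sup>2"
      using assms(3) inner_matrix_vector_symmetric[OF sym, of z ?h] by (simp add: algebra_simps)
    finally show ?thesis .
  qed
  then have "2 * (?h \<bullet> ?h) = 0" by (rule linear_plus_quadratic_nonneg_imp_zero)
  then show ?thesis by simp
qed

lemma symmetric_matrix_max_eigenvalue:
  fixes S :: "real^'n^'n"
  assumes sym: "transpose S = S"
  obtains z lam where "z \<noteq> 0" "S *v z = lam *s z" "\<And>v. v \<bullet> (S *v v) \<le> lam * (v \<bullet> v)"
proof -
  let ?q = "\<lambda>v. v \<bullet> (S *v v)"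
  have "continuous_on (sphere 0 1) ?q"
    by (intro continuous_intros linear_continuous_on matrix_vector_mul_bounded_linear)
  moreover have "sphere (0::real^'n) 1 \<noteq> {}"
    using vector_choose_size[of 1] by (auto simp: dist_norm)
  ultimately obtain z where z: "norm z = 1" and zmax: "\<And>u. norm u = 1 \<Longrightarrow> ?q u \<le> ?q z"
    using continuous_attains_sup[OF compact_sphere, of 0 1 ?q] by auto
  define lam where "lam = ?q z"
  have bound: "?q v \<le> lam * (v \<bullet> v)" for v
  proof (cases "v = 0")
    case False
    define u where "u = (1 / norm v) *\<^sub>R v"
    have "?q u \<le> lam" unfolding lam_def by (rule zmax) (use False in \<open>simp add: u_def\<close>)
    moreover have "?q v = ?q u * (norm v)\<^sup>2"
      using False by (simp add: u_def matrix_vector_mult_scaleR power2_eq_square)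
    ultimately show ?thesis by (simp add: dot_square_norm mult_right_mono)
  qed simp
  \<comment> \<open>By maximality of \<open>lam\<close>, \<open>lam I - S\<close> is positive semidefinite and its form vanishes at \<open>z\<close>.\<close>
  define T where "T = lam *\<^sub>R mat 1 - S"
  have Tv: "T *v v = lam *\<^sub>R v - S *v v" for v
    unfolding T_def by (simp add: matrix_vector_mult_diff_rdistrib scaleR_matrix_vector_assoc[symmetric])
  have "transpose T = T"
    using sym unfolding T_def by (simp add: vec_eq_iff transpose_def mat_def)
  moreover have "0 \<le> v \<bullet> (T *v v)" for v
    using bound[of v] by (simp add: Tv inner_diff_right)
  moreover have "z \<bullet> (T *v z) = 0"
    using z by (simp add: Tv inner_diff_right lam_def dot_square_norm)
  ultimately have "T *v z = 0" by (rule psd_quadratic_form_eq_0_imp_zero)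
  then have "S *v z = lam *s z" by (simp add: Tv vec_eq_iff)
  moreover have "z \<noteq> 0" using z by auto
  ultimately show ?thesis using that bound by blast
qed

lemma symmetric_matrix_min_eigenvalue:
  fixes S :: "real^'n^'n"
  assumes "transpose S = S"
  obtains z lam where "z \<noteq> 0" "S *v z = lam *s z" "\<And>v. lam * (v \<bullet> v) \<le> v \<bullet> (S *v v)"
proof -
  have neg: "(- S) *v v = - (S *v v)" for v
    by (simp add: vec_eq_iff matrix_vector_mult_def sum_negf)
  have "transpose (- S) = - S"
    using assms by (simp add: vec_eq_iff transpose_def)
  then obtain z lam where z: "z \<noteq> 0" and eig: "(- S) *v z = lam *s z"
    and bound: "\<And>v. v \<bullet> ((- S) *v v) \<le> lam * (v \<bullet> v)"
    using symmetric_matrix_max_eigenvalue by blast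
  show ?thesis
  proof (rule that)
    show "z \<noteq> 0" by (fact z)
    show "S *v z = (- lam) *s z"
      using eig by (simp add: neg vec_eq_iff) (metis minus_minus)
    show "(- lam) * (v \<bullet> v) \<le> v \<bullet> (S *v v)" for v
      using bound[of v] by (simp add: neg)
  qed
qed

lemma finite_eigenvalues_symmetric:
  fixes S :: "real^'n^'n"
  assumes sym: "transpose S = S"
  shows "finite {lam. \<exists>v. v \<noteq> 0 \<and> S *v v = lam *s v}"
proof -
  define E where "E = {lam. \<exists>v. v \<noteq> 0 \<and> S *v v = lam *s v}"
  define ev where "ev lam = (SOME v. v \<noteq> 0 \<and> S *v v = lam *s v)" for lam
  have ev: "ev lam \<noteq> 0 \<and> S *v ev lam = lam *s ev lam" if "lam \<in> E" for lam
    using that unfolding E_def ev_def by (metis (mono_tags, lifting) mem_Collect_eq someI_ex)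
  have inj: "inj_on ev E"
  proof (rule inj_onI)
    fix l1 l2 assume "l1 \<in> E" "l2 \<in> E" "ev l1 = ev l2"
    then have "l1 *s ev l1 = l2 *s ev l1" "ev l1 \<noteq> 0" using ev by metis+
    then show "l1 = l2" by (metis vector_mul_rcancel)
  qed
  have "pairwise orthogonal (ev ` E)"
  proof (clarsimp simp: pairwise_def)
    fix l1 l2 assume l: "l1 \<in> E" "l2 \<in> E" "ev l1 \<noteq> ev l2"
    have "ev l1 \<bullet> (S *v ev l2) = ev l2 \<bullet> (S *v ev l1)"
      by (rule inner_matrix_vector_symmetric[OF sym])
    then have "l2 * (ev l1 \<bullet> ev l2) = l1 * (ev l1 \<bullet> ev l2)"
      using ev[OF l(1)] ev[OF l(2)] by (simp add: inner_vec_def sum_distrib_left algebra_simps)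
    moreover have "l1 \<noteq> l2" using l by auto
    ultimately show "orthogonal (ev l1) (ev l2)" by (simp add: orthogonal_def)
  qed
  moreover have "0 \<notin> ev ` E" using ev by auto
  ultimately have "finite (ev ` E)"
    using pairwise_orthogonal_independent finiteI_independent by blast
  then have "finite E" using inj by (rule finite_imageD)
  then show ?thesis unfolding E_def .
qed

lemma norm_vec_sq_eq_sum: "(norm (v::real^'n))\<^sup>2 = (\<Sum>i\<in>UNIV. (v $ i)\<^sup>2)"
  unfolding power2_norm_eq_inner by (simp add: inner_vec_def power2_eq_square)

lemma invertible_mult_matrix_inv:
  fixes A :: "'a::semiring_1^'n^'n"
  assumes "invertible A"
  shows "A ** matrix_inv A = mat 1"
  using assms unfolding invertible_def matrix_inv_def by (rule someI_ex[THEN conjunct1])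

lemma inner_mult_transpose_eq_norm_sq:
  fixes L :: "real^'n^'n"
  shows "v \<bullet> ((L ** transpose L) *v v) = (norm (transpose L *v v))\<^sup>2"
proof -
  have "v \<bullet> ((L ** transpose L) *v v) = (v v* L) \<bullet> (transpose L *v v)"
    by (simp add: dot_lmul_matrix matrix_vector_mul_assoc[symmetric])
  then show ?thesis by (simp add: transpose_matrix_vector power2_norm_eq_inner)
qed

lemma finite_singular_values: "finite (singular_values L)"
proof -
  have "transpose (transpose L ** L) = transpose L ** L"
    by (simp add: matrix_transpose_mul)
  then have "finite (sqrt ` {lam. \<exists>v. v \<noteq> 0 \<and> (transpose L ** L) *v v = lam *s v})"
    by (intro finite_imageI finite_eigenvalues_symmetric)
  moreover have "singular_values L = sqrt ` {lam. \<exists>v. v \<noteq> 0 \<and> (transpose L ** L) *v v = lam *s v}"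
    unfolding singular_values_def by blast
  ultimately show ?thesis by simp
qed

lemma singular_values_pos:
  fixes L :: "real^'n^'n"
  assumes "invertible L" and "s \<in> singular_values L"
  shows "0 < s"
proof -
  obtain lam v where s: "s = sqrt lam" and "v \<noteq> 0" and eig: "(transpose L ** L) *v v = lam *s v"
    using assms(2) unfolding singular_values_def by blast
  then have "L *v v \<noteq> 0"
    using inj_matrix_vector_mult[OF assms(1)] by (metis injD matrix_vector_mult_0_right)
  then have "0 < (norm (L *v v))\<^sup>2" by simp
  also have "\<dots> = lam * (v \<bullet> v)"
    using inner_mult_transpose_eq_norm_sq[of v "transpose L"] eig
    by (simp add: inner_vec_def sum_distrib_left algebra_simps)
  finally have "0 < lam * (v \<bullet> v)" .
  then have "0 < lam" using inner_ge_zero[of v] by (auto simp: zero_less_mult_iff)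
  then show ?thesis using s by simp
qed

text \<open>Singular values are defined through \<open>L\<^sup>T L\<close>, whereas \<open>|L\<^sup>T v|\<^sup>2\<close> is the quadratic form of
  \<open>L L\<^sup>T\<close>; the map \<open>z \<mapsto> L\<^sup>T z\<close> transfers eigenvectors from the latter to the former.\<close>

lemma eigenvalue_mult_transpose_singular_value:
  fixes L :: "real^'n^'n"
  assumes "invertible L" and "z \<noteq> 0" and eig: "(L ** transpose L) *v z = lam *s z"
  shows "sqrt lam \<in> singular_values L" and "0 \<le> lam"
proof -
  have "transpose L *v z \<noteq> 0"
    using inj_matrix_vector_mult[OF transpose_invertible[OF assms(1)]] assms(2)
    by (metis injD matrix_vector_mult_0_right)
  moreover have "(transpose L ** L) *v (transpose L *v z) = transpose L *v ((L ** transpose L) *v z)"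
    by (simp only: matrix_vector_mul_assoc matrix_mul_assoc)
  then have "(transpose L ** L) *v (transpose L *v z) = lam *s (transpose L *v z)"
    using eig by (simp add: vector_scalar_commute)
  ultimately show "sqrt lam \<in> singular_values L" unfolding singular_values_def by blast
  have "lam * (z \<bullet> z) = (norm (transpose L *v z))\<^sup>2"
    using inner_mult_transpose_eq_norm_sq[of z L] eig
    by (simp add: inner_vec_def sum_distrib_left algebra_simps)
  moreover have "0 < z \<bullet> z" using \<open>z \<noteq> 0\<close> by simp
  ultimately show "0 \<le> lam" by (metis zero_le_mult_iff zero_le_power2 linorder_not_less)
qed

lemma singular_value_bounds:
  fixes L :: "real^'n^'n"
  assumes "invertible L"
  obtains a b where "a \<in> singular_values L" "b \<in> singular_values L"
    "\<And>v. a\<^sup>2 * (norm v)\<^sup>2 \<le> (norm (transpose L *v v))\<^sup>2"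
    "\<And>v. (norm (transpose L *v v))\<^sup>2 \<le> b\<^sup>2 * (norm v)\<^sup>2"
proof -
  have sym: "transpose (L ** transpose L) = L ** transpose L"
    by (simp add: matrix_transpose_mul)
  obtain z lam where z: "z \<noteq> 0" "(L ** transpose L) *v z = lam *s z"
    and lo: "\<And>v. lam * (v \<bullet> v) \<le> v \<bullet> ((L ** transpose L) *v v)"
    using symmetric_matrix_min_eigenvalue[OF sym] by blast
  obtain z' mu where z': "z' \<noteq> 0" "(L ** transpose L) *v z' = mu *s z'"
    and hi: "\<And>v. v \<bullet> ((L ** transpose L) *v v) \<le> mu * (v \<bullet> v)"
    using symmetric_matrix_max_eigenvalue[OF sym] by blast
  note a = eigenvalue_mult_transpose_singular_value[OF assms z]
  note b = eigenvalue_mult_transpose_singular_value[OF assms z']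
  show ?thesis
  proof (rule that[OF a(1) b(1)])
    show "(sqrt lam)\<^sup>2 * (norm v)\<^sup>2 \<le> (norm (transpose L *v v))\<^sup>2" for v
      using lo[of v] a(2) by (simp add: inner_mult_transpose_eq_norm_sq dot_square_norm)
    show "(norm (transpose L *v v))\<^sup>2 \<le> (sqrt mu)\<^sup>2 * (norm v)\<^sup>2" for v
      using hi[of v] b(2) by (simp add: inner_mult_transpose_eq_norm_sq dot_square_norm)
  qed
qed

section \<open>Counting subsets\<close>

lemma card_subsets_containing:
  assumes "finite A" and "y \<in> A" and "1 \<le> m"
  shows "card {J. J \<subseteq> A \<and> card J = m \<and> y \<in> J} = (card A - 1) choose (m - 1)"
proof -
  have "bij_betw (insert y) {K. K \<subseteq> A - {y} \<and> card K = m - 1} {J. J \<subseteq> A \<and> card J = m \<and> y \<in> J}"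
  proof (rule bij_betwI[where g = "\<lambda>J. J - {y}"])
    show "insert y \<in> {K. K \<subseteq> A - {y} \<and> card K = m - 1} \<rightarrow> {J. J \<subseteq> A \<and> card J = m \<and> y \<in> J}"
    proof
      fix K assume K: "K \<in> {K. K \<subseteq> A - {y} \<and> card K = m - 1}"
      then have "finite K" and "y \<notin> K" using assms(1) finite_subset by auto
      then show "insert y K \<in> {J. J \<subseteq> A \<and> card J = m \<and> y \<in> J}" using K assms by auto
    qed
    show "(\<lambda>J. J - {y}) \<in> {J. J \<subseteq> A \<and> card J = m \<and> y \<in> J} \<rightarrow> {K. K \<subseteq> A - {y} \<and> card K = m - 1}"
    proof
      fix J assume J: "J \<in> {J. J \<subseteq> A \<and> card J = m \<and> y \<in> J}"
      then have "finite J" using assms(1) finite_subset by blast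
      with J show "J - {y} \<in> {K. K \<subseteq> A - {y} \<and> card K = m - 1}" by auto
    qed
  qed auto
  then have "card {J. J \<subseteq> A \<and> card J = m \<and> y \<in> J} = card (A - {y}) choose (m - 1)"
    using assms(1) by (simp add: bij_betw_same_card[symmetric] n_subsets)
  then show ?thesis using assms(1,2) by simp
qed

lemma sum_sum_subsets_of_card:
  fixes h :: "'a \<Rightarrow> 'b::comm_semiring_1"
  assumes "finite A" and "1 \<le> m"
  shows "(\<Sum>J | J \<subseteq> A \<and> card J = m. \<Sum>y\<in>J. h y) = of_nat ((card A - 1) choose (m - 1)) * (\<Sum>y\<in>A. h y)"
proof -
  let ?F = "{J. J \<subseteq> A \<and> card J = m}"
  have "finite ?F" using assms(1) by simp
  have "(\<Sum>J\<in>?F. \<Sum>y\<in>J. h y) = (\<Sum>J\<in>?F. \<Sum>y | y \<in> A \<and> y \<in> J. h y)"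
    by (intro sum.cong refl) auto
  also have "\<dots> = (\<Sum>y\<in>A. \<Sum>J | J \<in> ?F \<and> y \<in> J. h y)"
    using \<open>finite ?F\<close> assms(1) by (rule sum.swap_restrict)
  also have "\<dots> = (\<Sum>y\<in>A. of_nat (card {J. J \<subseteq> A \<and> card J = m \<and> y \<in> J}) * h y)"
    by (intro sum.cong refl) simp
  also have "\<dots> = (\<Sum>y\<in>A. of_nat ((card A - 1) choose (m - 1)) * h y)"
    using assms by (intro sum.cong refl) (simp add: card_subsets_containing)
  finally show ?thesis by (simp add: sum_distrib_left)
qed

lemma sum_sum_square_diff_centered:
  fixes d :: "'a \<Rightarrow> real"
  assumes "finite A" and "(\<Sum>y\<in>A. d y) = 0"
  shows "(\<Sum>x\<in>A. \<Sum>y\<in>A. (d y - d x)\<^sup>2) = 2 * real (card A) * (\<Sum>y\<in>A. (d y)\<^sup>2)"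
proof -
  have "(\<Sum>y\<in>A. (d y - d x)\<^sup>2) = (\<Sum>y\<in>A. (d y)\<^sup>2) + real (card A) * (d x)\<^sup>2" for x
  proof -
    have "(\<Sum>y\<in>A. (d y - d x)\<^sup>2) = (\<Sum>y\<in>A. (d y)\<^sup>2 + (d x)\<^sup>2 - 2 * d x * d y)"
      by (simp add: power2_diff algebra_simps)
    also have "\<dots> = (\<Sum>y\<in>A. (d y)\<^sup>2) + real (card A) * (d x)\<^sup>2 - 2 * d x * (\<Sum>y\<in>A. d y)"
      by (simp add: sum.distrib sum_subtractf sum_distrib_left)
    finally show ?thesis using assms(2) by simp
  qed
  then show ?thesis by (simp add: sum.distrib sum_distrib_left[symmetric])
qed

lemma choose_pred_ratio:
  assumes "0 < m" and "m < n"
  shows "real ((n - 2) choose (m - 1)) / real ((n - 1) choose m) = real m / (real n - 1)"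
proof -
  have "m * ((n - 1) choose m) = (n - 1) * ((n - 2) choose (m - 1))"
    using times_binomial_minus1_eq[OF assms(1), of "n - 1"] by (simp add: numeral_2_eq_2)
  then have "real m * real ((n - 1) choose m) = real (n - 1) * real ((n - 2) choose (m - 1))"
    unfolding of_nat_mult[symmetric] by (rule arg_cong)
  moreover have "real (n - 1) = real n - 1" using assms by (simp add: of_nat_diff)
  moreover have "0 < (n - 1) choose m" and "1 < real n" using assms by auto
  ultimately show ?thesis by (simp add: field_simps)
qed

section \<open>Pivot matrices\<close>

lemma bij_enum_J:
  assumes "J \<in> subsets_J yt TYPE('m::finite)"
  shows "bij_betw (enum_J J :: 'm \<Rightarrow> 'y::finite) UNIV J"
proof -
  have "card (UNIV :: 'm set) = card J" using assms unfolding subsets_J_def by simp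
  then have "\<exists>e. bij_betw (e :: 'm \<Rightarrow> 'y) UNIV J"
    by (metis finite finite_same_card_bij)
  then show ?thesis unfolding enum_J_def by (rule someI_ex)
qed

lemma sum_pivots_subsets_square_diff:
  fixes d :: "'y::finite \<Rightarrow> real"
  assumes "(\<Sum>y\<in>UNIV. d y) = 0"
  shows "(\<Sum>yt\<in>UNIV. \<Sum>J\<in>subsets_J yt TYPE('m::finite). \<Sum>j\<in>(UNIV::'m set). (d (enum_J J j) - d yt)\<^sup>2)
     = 2 * real CARD('y) * real ((CARD('y) - 2) choose (CARD('m) - 1)) * (\<Sum>y\<in>UNIV. (d y)\<^sup>2)"
proof -
  let ?c = "real ((CARD('y) - 2) choose (CARD('m) - 1))"
  have "(\<Sum>J\<in>subsets_J yt TYPE('m). \<Sum>j\<in>(UNIV::'m set). (d (enum_J J j) - d yt)\<^sup>2)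
      = ?c * (\<Sum>y\<in>UNIV. (d y - d yt)\<^sup>2)" for yt
  proof -
    have "(\<Sum>J\<in>subsets_J yt TYPE('m). \<Sum>j\<in>(UNIV::'m set). (d (enum_J J j) - d yt)\<^sup>2)
        = (\<Sum>J | J \<subseteq> UNIV - {yt} \<and> card J = CARD('m). \<Sum>y\<in>J. (d y - d yt)\<^sup>2)"
      unfolding subsets_J_def
      by (intro sum.cong refl sum.reindex_bij_betw bij_enum_J[of _ yt, unfolded subsets_J_def]) simp
    also have "\<dots> = ?c * (\<Sum>y\<in>UNIV - {yt}. (d y - d yt)\<^sup>2)"
      by (subst sum_sum_subsets_of_card) (simp_all add: card_Diff_singleton numeral_2_eq_2)
    also have "\<dots> = ?c * (\<Sum>y\<in>UNIV. (d y - d yt)\<^sup>2)"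
      by (simp add: sum_diff1)
    finally show ?thesis .
  qed
  then show ?thesis
    by (simp add: sum_distrib_left[symmetric] sum_sum_square_diff_centered[OF finite assms])
qed

lemma transpose_Ltil_mult_component:
  "(transpose (Ltil g yt J) *v v) $ j = v \<bullet> g (enum_J J j) - v \<bullet> g yt"
  by (simp add: matrix_vector_mult_def transpose_def Ltil_def inner_vec_def sum_subtractf algebra_simps)

lemma transpose_Ltil_mult_Atil:
  assumes "invertible (Ltil g yt J)"
  shows "transpose (Ltil g yt J) *v (Atil g g' yt J *v v) = transpose (Ltil g' yt J) *v v"
  using invertible_mult_matrix_inv[OF transpose_invertible[OF assms]]
  unfolding Atil_def by (metis matrix_mul_assoc matrix_mul_lid matrix_vector_mul_assoc)

lemma sum_norm_transpose_Ltil_residual: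
  fixes f f' :: "'x \<Rightarrow> real^'m::finite" and g g' :: "'y::finite \<Rightarrow> real^'m"
  assumes "in_Theta g" and "in_Theta g'"
    and inv: "\<And>yt J. J \<in> subsets_J yt TYPE('m) \<Longrightarrow> invertible (Ltil g yt J)"
  shows "(\<Sum>yt\<in>UNIV. \<Sum>J\<in>subsets_J yt TYPE('m).
            (norm (transpose (Ltil g yt J) *v (f x - Atil g g' yt J *v f' x)))\<^sup>2)
       = 2 * real CARD('y) * real ((CARD('y) - 2) choose (CARD('m) - 1))
           * (norm (logits f g x - logits f' g' x))\<^sup>2"
proof -
  define d where "d = logits f g x - logits f' g' x"
  have d: "d $ y = f x \<bullet> g y - f' x \<bullet> g' y" for y
    unfolding d_def logits_def by simp
  have "(\<Sum>y\<in>UNIV. d $ y) = f x \<bullet> (\<Sum>y\<in>UNIV. g y) - f' x \<bullet> (\<Sum>y\<in>UNIV. g' y)"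
    by (simp add: d sum_subtractf inner_sum_right)
  then have centered: "(\<Sum>y\<in>UNIV. d $ y) = 0"
    using assms(1,2) unfolding in_Theta_def by simp
  have component: "(transpose (Ltil g yt J) *v (f x - Atil g g' yt J *v f' x)) $ j = d $ enum_J J j - d $ yt"
    if "J \<in> subsets_J yt TYPE('m)" for yt J j
    by (simp only: matrix_vector_mult_diff_distrib transpose_Ltil_mult_Atil[OF inv[OF that]]
        vector_minus_component transpose_Ltil_mult_component d)
  have "(\<Sum>yt\<in>UNIV. \<Sum>J\<in>subsets_J yt TYPE('m).
            (norm (transpose (Ltil g yt J) *v (f x - Atil g g' yt J *v f' x)))\<^sup>2)
      = (\<Sum>yt\<in>UNIV. \<Sum>J\<in>subsets_J yt TYPE('m). \<Sum>j\<in>(UNIV::'m set). (d $ enum_J J j - d $ yt)\<^sup>2)"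
    by (intro sum.cong refl) (simp only: norm_vec_sq_eq_sum component)
  also have "\<dots> = 2 * real CARD('y) * real ((CARD('y) - 2) choose (CARD('m) - 1)) * (\<Sum>y\<in>UNIV. (d $ y)\<^sup>2)"
    by (rule sum_pivots_subsets_square_diff[OF centered])
  finally show ?thesis unfolding d_def norm_vec_sq_eq_sum[of "logits f g x - logits f' g' x"] .
qed

lemma subsets_J_nonempty:
  assumes "CARD('m::finite) < CARD('y::finite)"
  shows "subsets_J (yt::'y) TYPE('m) \<noteq> {}"
proof -
  have "CARD('m) \<le> card (UNIV - {yt})" using assms by (simp add: card_Diff_singleton)
  then obtain J where "J \<subseteq> UNIV - {yt}" "card J = CARD('m)"
    by (meson obtain_subset_with_card_n)
  then show ?thesis unfolding subsets_J_def by blast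
qed

lemma finite_all_singular_values: "finite (all_singular_values g)"
  unfolding all_singular_values_def by (intro finite_UN_I finite finite_singular_values)

lemma all_singular_values_pos:
  assumes "\<And>yt J. J \<in> subsets_J yt TYPE('m) \<Longrightarrow> invertible (Ltil g yt J)"
    and "s \<in> all_singular_values (g :: 'y::finite \<Rightarrow> real^'m::finite)"
  shows "0 < s"
  using assms singular_values_pos unfolding all_singular_values_def by blast

lemma all_singular_values_nonempty:
  assumes "\<And>yt J. J \<in> subsets_J yt TYPE('m) \<Longrightarrow> invertible (Ltil g yt J)"
    and "CARD('m) < CARD('y)"
  shows "all_singular_values (g :: 'y::finite \<Rightarrow> real^'m::finite) \<noteq> {}"
proof -
  obtain J where J: "J \<in> subsets_J (undefined::'y) TYPE('m)"
    using subsets_J_nonempty[OF assms(2)] by blast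
  then obtain a where "a \<in> singular_values (Ltil g undefined J)"
    using singular_value_bounds[OF assms(1)[OF J]] by metis
  with J show ?thesis unfolding all_singular_values_def by blast
qed

lemma norm_transpose_Ltil_bounds:
  fixes g :: "'y::finite \<Rightarrow> real^'m::finite"
  assumes inv: "\<And>yt J. J \<in> subsets_J yt TYPE('m) \<Longrightarrow> invertible (Ltil g yt J)"
    and J: "J \<in> subsets_J yt TYPE('m)"
  shows "(Min (all_singular_values g))\<^sup>2 * (norm v)\<^sup>2 \<le> (norm (transpose (Ltil g yt J) *v v))\<^sup>2"
    and "(norm (transpose (Ltil g yt J) *v v))\<^sup>2 \<le> (Max (all_singular_values g))\<^sup>2 * (norm v)\<^sup>2"
proof -
  let ?S = "all_singular_values g"
  obtain a b where "a \<in> singular_values (Ltil g yt J)" "b \<in> singular_values (Ltil g yt J)"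
    and lo: "a\<^sup>2 * (norm v)\<^sup>2 \<le> (norm (transpose (Ltil g yt J) *v v))\<^sup>2"
    and hi: "(norm (transpose (Ltil g yt J) *v v))\<^sup>2 \<le> b\<^sup>2 * (norm v)\<^sup>2"
    using singular_value_bounds[OF inv[OF J]] by metis
  then have ab: "a \<in> ?S" "b \<in> ?S" using J unfolding all_singular_values_def by blast+
  have fin: "finite ?S" by (rule finite_all_singular_values)
  then have "Min ?S \<in> ?S" using ab by (auto intro: Min_in)
  then have "0 < Min ?S" using inv by (rule all_singular_values_pos[rotated])
  moreover have "0 < b" using ab(2) inv by (rule all_singular_values_pos[rotated])
  moreover have "Min ?S \<le> a" "b \<le> Max ?S" using fin ab by auto
  ultimately have "(Min ?S)\<^sup>2 \<le> a\<^sup>2" "b\<^sup>2 \<le> (Max ?S)\<^sup>2"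
    by (auto intro!: power_mono)
  then show "(Min ?S)\<^sup>2 * (norm v)\<^sup>2 \<le> (norm (transpose (Ltil g yt J) *v v))\<^sup>2"
    and "(norm (transpose (Ltil g yt J) *v v))\<^sup>2 \<le> (Max ?S)\<^sup>2 * (norm v)\<^sup>2"
    using lo hi by (meson mult_right_mono zero_le_power2 order_trans)+
qed

section \<open>Integration\<close>

lemma borel_measurable_matrix_vector_mult:
  fixes A :: "real^'n^'m"
  assumes "h \<in> borel_measurable M"
  shows "(\<lambda>x. A *v h x) \<in> borel_measurable M"
  by (rule borel_measurable_continuous_on[OF _ assms])
     (intro linear_continuous_on matrix_vector_mul_bounded_linear)

lemma integrable_norm_sq_diff_matrix_vector:
  fixes f :: "'a \<Rightarrow> real^'m" and f' :: "'a \<Rightarrow> real^'n" and A :: "real^'n^'m"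
  assumes "f \<in> borel_measurable M" and "f' \<in> borel_measurable M"
    and "integrable M (\<lambda>x. (norm (f x))\<^sup>2)" and "integrable M (\<lambda>x. (norm (f' x))\<^sup>2)"
  shows "integrable M (\<lambda>x. (norm (f x - A *v f' x))\<^sup>2)"
proof -
  obtain K where K: "\<And>v. norm (A *v v) \<le> norm v * K"
    using bounded_linear.bounded[OF matrix_vector_mul_bounded_linear] by blast
  define B where "B x = 2 * (norm (f x))\<^sup>2 + 2 * K\<^sup>2 * (norm (f' x))\<^sup>2" for x
  have bound: "(norm (f x - A *v f' x))\<^sup>2 \<le> B x" for x
  proof -
    have "norm (f x - A *v f' x) \<le> norm (f x) + norm (f' x) * K"
      using norm_triangle_ineq4[of "f x" "A *v f' x"] K[of "f' x"] by linarith
    then have "(norm (f x - A *v f' x))\<^sup>2 \<le> (norm (f x) + norm (f' x) * K)\<^sup>2"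
      by (intro power_mono) auto
    also have "\<dots> \<le> B x"
      using zero_le_power2[of "norm (f x) - norm (f' x) * K"]
      unfolding B_def by (simp add: power2_eq_square algebra_simps)
    finally show ?thesis .
  qed
  have "(\<lambda>x. f x - A *v f' x) \<in> borel_measurable M"
    using assms(1) borel_measurable_matrix_vector_mult[OF assms(2)] by (rule borel_measurable_diff)
  then have meas: "(\<lambda>x. (norm (f x - A *v f' x))\<^sup>2) \<in> borel_measurable M"
    by (rule borel_measurable_continuous_on[rotated]) (intro continuous_intros)
  have "integrable M B"
    using assms(3,4) unfolding B_def by simp
  moreover have "norm ((norm (f x - A *v f' x))\<^sup>2) \<le> norm (B x)" for x
    using bound[of x] by simp
  ultimately show ?thesis
    by (intro Bochner_Integration.integrable_bound[OF _ meas] AE_I2)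
qed

lemma integral_bounds_of_pointwise_bounds:
  fixes R W :: "'a \<Rightarrow> real"
  assumes R: "integrable M R" and W: "W \<in> borel_measurable M"
    and lo: "\<And>x. a * R x \<le> W x" and hi: "\<And>x. W x \<le> b * R x"
  shows "a * integral\<^sup>L M R \<le> integral\<^sup>L M W" and "integral\<^sup>L M W \<le> b * integral\<^sup>L M R"
proof -
  have bound: "norm (W x) \<le> norm ((\<bar>a\<bar> + \<bar>b\<bar>) * \<bar>R x\<bar>)" for x
  proof -
    have "W x \<le> \<bar>b\<bar> * \<bar>R x\<bar>"
      by (rule order_trans[OF hi]) (metis abs_ge_self abs_mult)
    moreover have "- W x \<le> \<bar>a\<bar> * \<bar>R x\<bar>"
      by (rule order_trans[of _ "- (a * R x)"]) (use lo in simp, metis abs_ge_minus_self abs_mult)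
    ultimately show ?thesis
      by (simp add: abs_le_iff distrib_right add_increasing add_increasing2)
  qed
  have "integrable M (\<lambda>x. (\<bar>a\<bar> + \<bar>b\<bar>) * \<bar>R x\<bar>)" using R by simp
  then have W_int: "integrable M W"
    using W by (rule Bochner_Integration.integrable_bound) (intro AE_I2 bound)
  have "integral\<^sup>L M (\<lambda>x. a * R x) \<le> integral\<^sup>L M W"
    using R W_int lo by (intro integral_mono) auto
  then show "a * integral\<^sup>L M R \<le> integral\<^sup>L M W" by simp
  have "integral\<^sup>L M W \<le> integral\<^sup>L M (\<lambda>x. b * R x)"
    using R W_int hi by (intro integral_mono) auto
  then show "integral\<^sup>L M W \<le> b * integral\<^sup>L M R" by simp
qed

section \<open>Comparing the two dissimilarities\<close>

lemma integral_sum_norm_sq_residual: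
  fixes M :: "'x measure" and f f' :: "'x \<Rightarrow> real^'m::finite" and g g' :: "'y::finite \<Rightarrow> real^'m"
  assumes "f \<in> borel_measurable M" and "f' \<in> borel_measurable M"
    and "integrable M (\<lambda>x. (norm (f x))\<^sup>2)" and "integrable M (\<lambda>x. (norm (f' x))\<^sup>2)"
    and "CARD('m) < CARD('y)"
  shows "integral\<^sup>L M (\<lambda>x. \<Sum>yt\<in>UNIV. \<Sum>J\<in>subsets_J yt TYPE('m). (norm (f x - Atil g g' yt J *v f' x))\<^sup>2)
       = real CARD('y) * real ((CARD('y) - 1) choose CARD('m)) * d_rep_sq M f g f' g'"
proof -
  have "integrable M (\<lambda>x. (norm (f x - Atil g g' yt J *v f' x))\<^sup>2)" for yt J
    using assms(1-4) by (rule integrable_norm_sq_diff_matrix_vector)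
  then have "integral\<^sup>L M (\<lambda>x. \<Sum>yt\<in>UNIV. \<Sum>J\<in>subsets_J yt TYPE('m). (norm (f x - Atil g g' yt J *v f' x))\<^sup>2)
      = (\<Sum>yt\<in>UNIV. \<Sum>J\<in>subsets_J yt TYPE('m). integral\<^sup>L M (\<lambda>x. (norm (f x - Atil g g' yt J *v f' x))\<^sup>2))"
    by (simp add: Bochner_Integration.integral_sum Bochner_Integration.integrable_sum)
  also have "\<dots> = real CARD('y) * real ((CARD('y) - 1) choose CARD('m)) * d_rep_sq M f g f' g'"
    using assms(5) unfolding d_rep_sq_def by simp
  finally show ?thesis .
qed

lemma d_rep_sq_d_logit_sq_bounds:
  fixes M :: "'x measure" and f f' :: "'x \<Rightarrow> real^'m::finite" and g g' :: "'y::finite \<Rightarrow> real^'m"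
  assumes meas: "f \<in> borel_measurable M" "f' \<in> borel_measurable M"
    and sq_int: "integrable M (\<lambda>x. (norm (f x))\<^sup>2)" "integrable M (\<lambda>x. (norm (f' x))\<^sup>2)"
    and Theta: "in_Theta g" "in_Theta g'"
    and inv: "\<And>yt J. J \<in> subsets_J yt TYPE('m) \<Longrightarrow> invertible (Ltil g yt J)"
    and card: "CARD('m) < CARD('y)"
  shows "(Min (all_singular_values g))\<^sup>2 * d_rep_sq M f g f' g'
           \<le> 2 * real CARD('m) / (real CARD('y) - 1) * d_logit_sq M f g f' g'"
    and "2 * real CARD('m) / (real CARD('y) - 1) * d_logit_sq M f g f' g'
           \<le> (Max (all_singular_values g))\<^sup>2 * d_rep_sq M f g f' g'"
proof -
  let ?kB = "real CARD('y) * real ((CARD('y) - 1) choose CARD('m))"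
  let ?C = "2 * real CARD('m) / (real CARD('y) - 1)"
  define res where "res yt J x = f x - Atil g g' yt J *v f' x" for yt J x
  define R where "R x = (\<Sum>yt\<in>UNIV. \<Sum>J\<in>subsets_J yt TYPE('m). (norm (res yt J x))\<^sup>2)" for x
  define W where "W x = (\<Sum>yt\<in>UNIV. \<Sum>J\<in>subsets_J yt TYPE('m).
                          (norm (transpose (Ltil g yt J) *v res yt J x))\<^sup>2)" for x
  have R_int: "integrable M R"
    unfolding R_def res_def using meas sq_int
    by (intro Bochner_Integration.integrable_sum integrable_norm_sq_diff_matrix_vector)
  have "res yt J \<in> borel_measurable M" for yt J
    unfolding res_def using meas(1) borel_measurable_matrix_vector_mult[OF meas(2)]
    by (rule borel_measurable_diff)
  then have W_meas: "W \<in> borel_measurable M"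
    unfolding W_def
    by (intro borel_measurable_sum borel_measurable_continuous_on[where f = "\<lambda>v. (norm v)\<^sup>2"]
        borel_measurable_matrix_vector_mult continuous_intros)
  have lo: "(Min (all_singular_values g))\<^sup>2 * R x \<le> W x" for x
    unfolding R_def W_def sum_distrib_left by (intro sum_mono norm_transpose_Ltil_bounds(1)[OF inv])
  have hi: "W x \<le> (Max (all_singular_values g))\<^sup>2 * R x" for x
    unfolding R_def W_def sum_distrib_left by (intro sum_mono norm_transpose_Ltil_bounds(2)[OF inv])
  have R_eq: "integral\<^sup>L M R = ?kB * d_rep_sq M f g f' g'"
    unfolding R_def res_def using meas sq_int card by (rule integral_sum_norm_sq_residual)
  have "2 * real CARD('y) * real ((CARD('y) - 2) choose (CARD('m) - 1)) = ?kB * ?C"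
    using choose_pred_ratio[of "CARD('m)" "CARD('y)"] card by (simp add: field_simps)
  then have "W x = ?kB * ?C * (norm (logits f g x - logits f' g' x))\<^sup>2" for x
    unfolding W_def res_def by (simp only: sum_norm_transpose_Ltil_residual[OF Theta inv])
  then have "W = (\<lambda>x. ?kB * ?C * (norm (logits f g x - logits f' g' x))\<^sup>2)" ..
  then have W_eq: "integral\<^sup>L M W = ?kB * (?C * d_logit_sq M f g f' g')"
    unfolding d_logit_sq_def by simp
  have "0 < ?kB" using card by simp
  then show "(Min (all_singular_values g))\<^sup>2 * d_rep_sq M f g f' g' \<le> ?C * d_logit_sq M f g f' g'"
    and "?C * d_logit_sq M f g f' g' \<le> (Max (all_singular_values g))\<^sup>2 * d_rep_sq M f g f' g'"
    using integral_bounds_of_pointwise_bounds[OF R_int W_meas lo hi]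
    unfolding R_eq W_eq mult.left_commute[of "(Min (all_singular_values g))\<^sup>2"]
      mult.left_commute[of "(Max (all_singular_values g))\<^sup>2"]
    by (simp_all only: mult_le_cancel_left_pos)
qed

lemma sqrt_bounds_of_scaled_bounds:
  fixes r q s S :: real
  assumes "0 < s" and "s \<le> S" and "s\<^sup>2 * r \<le> q" and "q \<le> S\<^sup>2 * r"
  shows "sqrt q / S \<le> sqrt r" and "sqrt r \<le> sqrt q / s"
proof -
  have "sqrt q \<le> S * sqrt r"
    using real_sqrt_le_mono[OF assms(4)] assms(1,2) by (simp add: real_sqrt_mult)
  then show "sqrt q / S \<le> sqrt r" using assms(1,2) by (simp add: divide_le_eq mult.commute)
  have "s * sqrt r \<le> sqrt q"
    using real_sqrt_le_mono[OF assms(3)] assms(1) by (simp add: real_sqrt_mult)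
  then show "sqrt r \<le> sqrt q / s" using assms(1) by (simp add: le_divide_eq mult.commute)
qed

theorem mainTheorem5:
  fixes px :: "'x::topological_space measure"
    and f f' :: "'x \<Rightarrow> real^'m::finite"
    and g g' :: "'y::finite \<Rightarrow> real^'m"
  assumes "prob_space px" and "sets px = sets borel"
    and "f \<in> borel_measurable px" and "f' \<in> borel_measurable px"
    and "integrable px (\<lambda>x. (norm (f x))\<^sup>2)" and "integrable px (\<lambda>x. (norm (f' x))\<^sup>2)"
    and "in_Theta g" and "in_Theta g'"
    and "general_position px f g" and "general_position px f' g'"
    and "CARD('y) \<ge> CARD('m) + 1"
  shows "sqrt (2 * real CARD('m) / (real CARD('y) - 1)) * sqrt (d_logit_sq px f g f' g')
           / Max (all_singular_values g) \<le> sqrt (d_rep_sq px f g f' g')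
       \<and> sqrt (d_rep_sq px f g f' g') \<le>
         sqrt (2 * real CARD('m) / (real CARD('y) - 1)) * sqrt (d_logit_sq px f g f' g')
           / Min (all_singular_values g)"
proof -
  let ?S = "all_singular_values g"
  \<comment> \<open>Only the invertibility half of the general position of \<open>(f, g)\<close> is needed.\<close>
  have inv: "\<And>yt J. J \<in> subsets_J yt TYPE('m) \<Longrightarrow> invertible (Ltil g yt J)"
    using assms(9) unfolding general_position_def by blast
  have card: "CARD('m) < CARD('y)" using assms(11) by simp
  have fin: "finite ?S" and ne: "?S \<noteq> {}"
    using finite_all_singular_values all_singular_values_nonempty[OF inv card] by auto
  have "0 < Min ?S"
    using Min_in[OF fin ne] inv by (rule all_singular_values_pos[rotated])
  moreover have "Min ?S \<le> Max ?S"
    using fin ne by (simp add: Min_le_iff)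
  moreover note d_rep_sq_d_logit_sq_bounds[OF assms(3-8) inv card]
  ultimately show ?thesis
    unfolding real_sqrt_mult[symmetric] by (blast intro: sqrt_bounds_of_scaled_bounds)
qed

end
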